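(* Let $E$ be a reflexive real Banach space with norm $\|\cdot\|$, let $X$ be a real Banach space with $E\hookrightarrow X$ compactly, and let $I\in C^1(E,\mathbb{R})$ be of the form $I=J-N$, where $N\in C^1(E,\mathbb{R})$ and $J$ is $2$-homogeneous, i.e. $J(\tau u)=\tau^2J(u)$ for all $\tau\in\mathbb{R}$, $u\in E$. Assume: (H1) there exist $t\in(0,1)$ and a function $\psi:E\to[0,\infty)$, homogeneous of degree one, with $\|u\|_X\le\psi(u)^{1-t}\|u\|^t$ for all $u\in E$; (H2) there exist $a,c,\mu>0$ with $|\langle N'(u),u\rangle-2N(u)|\ge a\psi(u)^\mu-c$ for all $u\in E$; (H3) there is $k>0$ with $J(u)\ge k\|u\|^2$ for all $u\in E$; (H4) there exist $b,d>0$ and $q>2$ with $|N(u)|\le b\|u\|_X^q+d$ for all $u\in E$; and suppose $qt<2$. Then $I$ satisfies condition $(\hat C)_c$ for every $c\in\mathbb{R}$.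
   Context: $I$ satisfies $(\hat C)_c$ if every sequence $(u_n)\subset E$ with $I(u_n)\to c$ and $(1+\|u_n\|)\,\|I'(u_n)\|_{E^*}\to0$ has a bounded subsequence. *)

theory Defs
  imports "HOL-Analysis.Analysis"
begin

definition reflexive_space :: "'a::real_normed_vector itself \<Rightarrow> bool" where
  "reflexive_space _ \<longleftrightarrow>
     (\<forall>\<phi> :: ('a \<Rightarrow>\<^sub>L real) \<Rightarrow>\<^sub>L real. \<exists>x::'a. \<forall>f. blinfun_apply \<phi> f = blinfun_apply f x)"

definition compact_embedding :: "('a::real_normed_vector \<Rightarrow> 'b::real_normed_vector) \<Rightarrow> bool" where
  "compact_embedding i \<longleftrightarrow> bounded_linear i \<and> inj i \<and>
     (\<forall>B. bounded B \<longrightarrow> compact (closure (i ` B)))"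

definition C1_with_deriv :: "('a::real_normed_vector \<Rightarrow> real) \<Rightarrow> ('a \<Rightarrow> ('a \<Rightarrow>\<^sub>L real)) \<Rightarrow> bool" where
  "C1_with_deriv F D \<longleftrightarrow> (\<forall>u. (F has_derivative blinfun_apply (D u)) (at u)) \<and> continuous_on UNIV D"

definition Chat_condition :: "('a::real_normed_vector \<Rightarrow> real) \<Rightarrow> ('a \<Rightarrow> ('a \<Rightarrow>\<^sub>L real)) \<Rightarrow> real \<Rightarrow> bool" where
  "Chat_condition I I' c \<longleftrightarrow>
     (\<forall>u. (\<lambda>n. I (u n)) \<longlonglongrightarrow> c \<and>
        (\<lambda>n. (1 + norm (u n)) * norm (I' (u n))) \<longlonglongrightarrow> 0 \<longrightarrow>
        (\<exists>r :: nat \<Rightarrow> nat. strict_mono r \<and> bounded (range (u \<circ> r))))"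

end

theory Submission
  imports Defs
begin

text \<open>
  Along a Cerami sequence both \<open>I u\<^sub>n\<close> and \<open>I'(u\<^sub>n) u\<^sub>n\<close> stay bounded. Since \<open>J\<close> is
  2-homogeneous, Euler's identity \<open>J'(u) u = 2 J(u)\<close> turns this into a bound on
  \<open>N'(u\<^sub>n) u\<^sub>n - 2 N(u\<^sub>n)\<close>, hence by (H2) a bound on \<open>\<psi>(u\<^sub>n)\<close>. By (H1) the \<open>X\<close>-norm then
  grows at most like \<open>\<parallel>u\<^sub>n\<parallel>\<^sup>t\<close>, so (H3) and (H4) give
  \<open>k \<parallel>u\<^sub>n\<parallel>\<^sup>2 \<le> C + D \<parallel>u\<^sub>n\<parallel>\<^bsup>qt\<^esup>\<close>, which bounds \<open>\<parallel>u\<^sub>n\<parallel>\<close> because \<open>qt < 2\<close>.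
  The whole sequence is bounded.
\<close>

lemma le_powr_inverse_if_powr_le:
  fixes x y p :: real
  assumes "0 \<le> x" "0 < p" "x powr p \<le> y"
  shows "x \<le> y powr (1 / p)"
proof -
  have "x = (x powr p) powr (1 / p)"
    using assms by (simp add: powr_powr)
  also have "\<dots> \<le> y powr (1 / p)"
    using assms by (intro powr_mono2) auto
  finally show ?thesis .
qed

lemma le_if_square_le_subquadratic:
  fixes k C D p x :: real
  assumes "k > 0" "C \<ge> 0" "D \<ge> 0" "0 < p" "p < 2" "x \<ge> 0"
    and square_le: "k * x\<^sup>2 \<le> C + D * x powr p"
  shows "x \<le> max 1 (((C + D) / k) powr (1 / (2 - p)))"
proof (cases "x \<le> 1")
  case False
  have "C \<le> C * x powr p"
    using False \<open>C \<ge> 0\<close> \<open>p > 0\<close> ge_one_powr_ge_zero by (simp add: mult_le_cancel_left1)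
  then have "k * x\<^sup>2 \<le> (C + D) * x powr p"
    using square_le by (simp add: distrib_right)
  moreover have "x\<^sup>2 = x powr (2 - p) * x powr p"
    using False by (simp add: powr_add[symmetric] powr_numeral)
  ultimately have "k * x powr (2 - p) * x powr p \<le> (C + D) * x powr p"
    by (simp add: mult.assoc)
  then have "k * x powr (2 - p) \<le> C + D"
    using False by simp
  then have "x powr (2 - p) \<le> (C + D) / k"
    using \<open>k > 0\<close> by (simp add: field_simps)
  then have "x \<le> ((C + D) / k) powr (1 / (2 - p))"
    using \<open>x \<ge> 0\<close> \<open>p < 2\<close> by (intro le_powr_inverse_if_powr_le) auto
  then show ?thesis
    by simp
qed simp

lemma two_homogeneous_deriv_self:
  fixes J :: "'a::real_normed_vector \<Rightarrow> real"
  assumes hom: "\<And>\<tau>. J (\<tau> *\<^sub>R u) = \<tau>\<^sup>2 * J u"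
    and deriv: "(J has_derivative J') (at u)"
  shows "J' u = 2 * J u"
proof -
  have "((\<lambda>\<tau>::real. \<tau> *\<^sub>R u) has_derivative (\<lambda>h. h *\<^sub>R u)) (at 1)"
    by (auto intro!: derivative_eq_intros)
  moreover have "(J has_derivative J') (at (1 *\<^sub>R u))"
    using deriv by simp
  ultimately have "((\<lambda>\<tau>::real. J (\<tau> *\<^sub>R u)) has_derivative (\<lambda>h. J' (h *\<^sub>R u))) (at 1)"
    using has_derivative_compose[of "\<lambda>\<tau>. \<tau> *\<^sub>R u"] by blast
  moreover have "((\<lambda>\<tau>::real. J (\<tau> *\<^sub>R u)) has_derivative (\<lambda>h. h * (2 * J u))) (at 1)"
    unfolding hom by (auto intro!: derivative_eq_intros)
  ultimately have "(\<lambda>h. J' (h *\<^sub>R u)) = (\<lambda>h. h * (2 * J u))"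
    by (rule has_derivative_unique)
  from fun_cong[OF this, of 1] show ?thesis by simp
qed

lemma deriv_self_diff_eq_if_two_homogeneous_part:
  fixes I J N :: "'a::real_normed_vector \<Rightarrow> real" and I' N' :: "'a \<Rightarrow> ('a \<Rightarrow>\<^sub>L real)"
  assumes "C1_with_deriv I I'" "C1_with_deriv N N'"
    and I_eq: "\<And>u. I u = J u - N u"
    and J_hom: "\<And>\<tau> u. J (\<tau> *\<^sub>R u) = \<tau>\<^sup>2 * J u"
  shows "N' u u - 2 * N u = 2 * I u - I' u u"
proof -
  have "J = (\<lambda>x. I x + N x)"
    using I_eq by auto
  then have "(J has_derivative (\<lambda>h. I' u h + N' u h)) (at u)"
    using assms(1,2) unfolding C1_with_deriv_def by (simp add: has_derivative_add)
  from two_homogeneous_deriv_self[OF J_hom this] show ?thesis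
    using I_eq[of u] by simp
qed

lemma abs_blinfun_apply_self_le:
  fixes f :: "'a::real_normed_vector \<Rightarrow>\<^sub>L real"
  shows "\<bar>f u\<bar> \<le> (1 + norm u) * norm f"
proof -
  have "\<bar>f u\<bar> \<le> norm f * norm u"
    using norm_blinfun[of f u] by simp
  also have "\<dots> \<le> (1 + norm u) * norm f"
    by (simp add: algebra_simps)
  finally show ?thesis .
qed

lemma Chat_condition_if_bounded_where_bounded:
  fixes I :: "'a::real_normed_vector \<Rightarrow> real" and I' :: "'a \<Rightarrow> ('a \<Rightarrow>\<^sub>L real)"
  assumes bound: "\<And>A B. \<exists>R. \<forall>u. \<bar>I u\<bar> \<le> A \<longrightarrow> \<bar>I' u u\<bar> \<le> B \<longrightarrow> norm u \<le> R"
  shows "Chat_condition I I' c"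
  unfolding Chat_condition_def
proof (intro allI impI)
  fix u :: "nat \<Rightarrow> 'a"
  assume "(\<lambda>n. I (u n)) \<longlonglongrightarrow> c \<and> (\<lambda>n. (1 + norm (u n)) * norm (I' (u n))) \<longlonglongrightarrow> 0"
  then have "Bseq (\<lambda>n. I (u n))" "Bseq (\<lambda>n. (1 + norm (u n)) * norm (I' (u n)))"
    by (auto intro: convergent_imp_Bseq convergentI)
  then obtain A B where A: "\<And>n. norm (I (u n)) \<le> A"
    and B: "\<And>n. norm ((1 + norm (u n)) * norm (I' (u n))) \<le> B"
    unfolding Bseq_def by blast
  have "\<bar>I' (u n) (u n)\<bar> \<le> B" for n
    using abs_blinfun_apply_self_le[of "I' (u n)" "u n"] B[of n] by simp
  moreover obtain R where "\<forall>u. \<bar>I u\<bar> \<le> A \<longrightarrow> \<bar>I' u u\<bar> \<le> B \<longrightarrow> norm u \<le> R"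
    using bound by blast
  ultimately have "norm (u n) \<le> R" for n
    using A[of n] by simp
  then have "bounded (range u)"
    unfolding bounded_iff by auto
  then show "\<exists>r :: nat \<Rightarrow> nat. strict_mono r \<and> bounded (range (u \<circ> r))"
    using strict_mono_id by fastforce
qed

lemma norm_le_if_psi_le:
  fixes i :: "'a::real_normed_vector \<Rightarrow> 'b::real_normed_vector"
    and J N \<psi> :: "'a \<Rightarrow> real"
  assumes "0 < t" "t < 1" "k > 0" "b \<ge> 0" "d \<ge> 0" "A \<ge> 0" "q > 0" "q * t < 2"
    and "0 \<le> \<psi> u" "\<psi> u \<le> M"
    and interpolation: "norm (i u) \<le> \<psi> u powr (1 - t) * norm u powr t"
    and coercive: "J u \<ge> k * (norm u)\<^sup>2"
    and growth: "\<bar>N u\<bar> \<le> b * norm (i u) powr q + d"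
    and level: "J u - N u \<le> A"
  shows "norm u \<le> max 1 (((A + d + b * M powr ((1 - t) * q)) / k) powr (1 / (2 - q * t)))"
proof -
  have "\<psi> u powr (1 - t) \<le> M powr (1 - t)"
    using \<open>0 \<le> \<psi> u\<close> \<open>\<psi> u \<le> M\<close> \<open>t < 1\<close> by (intro powr_mono2) auto
  then have "norm (i u) \<le> M powr (1 - t) * norm u powr t"
    using interpolation by (meson order_trans mult_right_mono powr_ge_zero)
  then have "norm (i u) powr q \<le> (M powr (1 - t) * norm u powr t) powr q"
    using \<open>q > 0\<close> by (intro powr_mono2) auto
  also have "\<dots> = M powr ((1 - t) * q) * norm u powr (q * t)"
    using \<open>0 \<le> \<psi> u\<close> \<open>\<psi> u \<le> M\<close> by (simp add: powr_mult powr_powr mult.commute)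
  finally have X_norm_le: "norm (i u) powr q \<le> M powr ((1 - t) * q) * norm u powr (q * t)" .
  have "k * (norm u)\<^sup>2 \<le> A + N u"
    using coercive level by simp
  also have "\<dots> \<le> A + (b * norm (i u) powr q + d)"
    using growth by simp
  also have "\<dots> \<le> A + (b * (M powr ((1 - t) * q) * norm u powr (q * t)) + d)"
    using X_norm_le \<open>b \<ge> 0\<close> by (simp add: mult_left_mono)
  also have "\<dots> = (A + d) + b * M powr ((1 - t) * q) * norm u powr (q * t)"
    by (simp add: algebra_simps)
  finally have square_le: "k * (norm u)\<^sup>2 \<le> (A + d) + b * M powr ((1 - t) * q) * norm u powr (q * t)" .
  have "0 \<le> A + d" "0 \<le> b * M powr ((1 - t) * q)" "0 < q * t"
    using \<open>A \<ge> 0\<close> \<open>d \<ge> 0\<close> \<open>b \<ge> 0\<close> \<open>q > 0\<close> \<open>t > 0\<close> by simp_all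
  from le_if_square_le_subquadratic[OF \<open>k > 0\<close> this \<open>q * t < 2\<close> norm_ge_zero square_le]
  show ?thesis .
qed

theorem theorem2p2:
  fixes i :: "'a::banach \<Rightarrow> 'b::banach"
    and I J N :: "'a \<Rightarrow> real"
    and I' N' :: "'a \<Rightarrow> ('a \<Rightarrow>\<^sub>L real)"
    and \<psi> :: "'a \<Rightarrow> real"
    and t a c0 \<mu> k b d q :: real
  assumes refl: "reflexive_space TYPE('a)"
    and emb: "compact_embedding i"
    and I_C1: "C1_with_deriv I I'"
    and N_C1: "C1_with_deriv N N'"
    and I_eq: "\<And>u. I u = J u - N u"
    and J_hom: "\<And>\<tau> u. J (\<tau> *\<^sub>R u) = \<tau>\<^sup>2 * J u"
    and t: "0 < t" "t < 1"
    and psi_nonneg: "\<And>u. \<psi> u \<ge> 0"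
    and psi_hom: "\<And>\<tau> u. \<tau> > 0 \<Longrightarrow> \<psi> (\<tau> *\<^sub>R u) = \<tau> * \<psi> u"
    and H1: "\<And>u. norm (i u) \<le> \<psi> u powr (1 - t) * norm u powr t"
    and H2_pos: "a > 0" "c0 > 0" "\<mu> > 0"
    and H2: "\<And>u. \<bar>N' u u - 2 * N u\<bar> \<ge> a * \<psi> u powr \<mu> - c0"
    and H3_pos: "k > 0"
    and H3: "\<And>u. J u \<ge> k * (norm u)\<^sup>2"
    and H4_pos: "b > 0" "d > 0" "q > 2"
    and H4: "\<And>u. \<bar>N u\<bar> \<le> b * norm (i u) powr q + d"
    and qt: "q * t < 2"
  shows "\<forall>c. Chat_condition I I' c"
proof (intro allI Chat_condition_if_bounded_where_bounded)
  fix A B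
  define M where "M = ((B + 2 * A + c0) / a) powr (1 / \<mu>)"
  have psi_le: "\<psi> u \<le> M" if "\<bar>I u\<bar> \<le> A" "\<bar>I' u u\<bar> \<le> B" for u
  proof -
    have "\<bar>N' u u - 2 * N u\<bar> \<le> B + 2 * A"
      unfolding deriv_self_diff_eq_if_two_homogeneous_part[OF I_C1 N_C1 I_eq J_hom]
      using that by linarith
    then have "\<psi> u powr \<mu> \<le> (B + 2 * A + c0) / a"
      using H2[of u] H2_pos by (simp add: field_simps)
    then show ?thesis
      unfolding M_def using psi_nonneg H2_pos by (intro le_powr_inverse_if_powr_le)
  qed
  define R where "R = max 1 (((A + d + b * M powr ((1 - t) * q)) / k) powr (1 / (2 - q * t)))"
  have "norm u \<le> R" if "\<bar>I u\<bar> \<le> A" "\<bar>I' u u\<bar> \<le> B" for u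
    unfolding R_def
  proof (rule norm_le_if_psi_le[OF t H3_pos _ _ _ _ qt psi_nonneg _ H1 H3 H4])
    show "\<psi> u \<le> M"
      using psi_le that .
    show "J u - N u \<le> A"
      using I_eq[of u] that by simp
    show "0 \<le> A"
      using that by (meson abs_ge_zero order_trans)
  qed (use H4_pos in auto)
  then show "\<exists>R. \<forall>u. \<bar>I u\<bar> \<le> A \<longrightarrow> \<bar>I' u u\<bar> \<le> B \<longrightarrow> norm u \<le> R"
    by blast
qed

end
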